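(* For every real $a>0$: (i) for every complex $s$ with $\Re(s)>2$, \[\sum_{k=1}^\infty \zeta(s,ka)=a^{-s}\sum_{n=0}^\infty \zeta\Big(s,\frac{n}{a}+1\Big);\] (ii) for every complex $s$ with $\Re(s)>1$, \[\sum_{k=1}^\infty (-1)^{k-1} \zeta(s,ka)=(2a)^{-s}\sum_{n=0}^\infty\Big\{\zeta\Big(s,\frac{n}{2a}+\frac{1}{2}\Big)-\zeta\Big(s,\frac{n}{2a}+1\Big)\Big\}.\]
   Context: $\zeta(s,\alpha)=\sum_{n=0}^\infty (n+\alpha)^{-s}$ denotes the Hurwitz zeta function ($\Re(s)>1$, $\alpha>0$). *)

theory Defs
  imports "HOL-Analysis.Analysis"
begin

text \<open>Hurwitz zeta function, defined by its Dirichlet series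
  zeta(s,alpha) = sum_{n>=0} (n+alpha)^(-s) (meaningful for Re s > 1, alpha > 0).\<close>
definition hurwitz_zeta :: "complex \<Rightarrow> real \<Rightarrow> complex" where
  "hurwitz_zeta s \<alpha> = (\<Sum>n. (complex_of_real (real n + \<alpha>)) powr (- s))"

end

theory Submission
  imports Defs "HOL-Probability.Characteristic_Functions"
begin

text \<open>Both identities come from summing a double series in two orders. For (i), the terms
  (m + k a)^(-s) with k \<ge> 1, m \<ge> 0 sum over m to zeta(s, k a) and over k to
  a^(-s) zeta(s, m/a + 1); for Re s > 2 the double series converges absolutely. For (ii), the
  terms k = 2j+1 and k = 2j+2 are paired first: x^(-s) - (x + a)^(-s) = O(x^(-Re s - 1)), so the
  paired double series converges absolutely already for Re s > 1, and the pairing can be undone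
  because zeta(s, x) tends to 0 as x tends to infinity.\<close>

lemma norm_of_real_powr:
  assumes "x > 0"
  shows "norm (complex_of_real x powr z) = x powr Re z"
  using assms by (subst norm_powr_real_powr) auto

lemma of_real_mult_powr:
  assumes "x \<ge> 0" "y \<ge> 0"
  shows "complex_of_real (x * y) powr z = complex_of_real x powr z * complex_of_real y powr z"
  unfolding of_real_mult using assms by (intro powr_times_real) auto

lemma summable_shifted_powr:
  assumes "p > 1" "c > 0"
  shows "summable (\<lambda>n. (real n + c) powr - p)"
proof (rule summable_comparison_test')
  show "summable (\<lambda>n. real n powr - p)"
    using assms summable_real_powr_iff[of "- p"] by simp
  show "norm ((real n + c) powr - p) \<le> real n powr - p" if "n \<ge> 1" for n
    using assms that by (auto intro: powr_mono2')
qed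

lemma has_sum_diff:
  fixes f g :: "'a \<Rightarrow> 'b::topological_ab_group_add"
  assumes "(f has_sum a) A" "(g has_sum b) A"
  shows "((\<lambda>x. f x - g x) has_sum (a - b)) A"
  using has_sum_add[OF assms(1) has_sum_uminus[where f = g and a = "- b", THEN iffD2]] assms(2) by simp

lemma hurwitz_zeta_series_summable_norm:
  assumes "Re s > 1" "c > 0"
  shows "summable (\<lambda>n. norm (complex_of_real (real n + c) powr - s))"
proof -
  have "norm (complex_of_real (real n + c) powr - s) = (real n + c) powr - Re s" for n
    using assms by (subst norm_of_real_powr) (auto simp: add_nonneg_pos)
  then show ?thesis
    using summable_shifted_powr[OF assms] by simp
qed

lemma hurwitz_zeta_has_sum:
  assumes "Re s > 1" "c > 0"
  shows "((\<lambda>n. complex_of_real (real n + c) powr - s) has_sum hurwitz_zeta s c) UNIV"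
proof (rule norm_summable_imp_has_sum)
  show "summable (\<lambda>n. norm (complex_of_real (real n + c) powr - s))"
    using assms by (rule hurwitz_zeta_series_summable_norm)
  then show "(\<lambda>n. complex_of_real (real n + c) powr - s) sums hurwitz_zeta s c"
    unfolding hurwitz_zeta_def by (rule summable_sums[OF summable_norm_cancel])
qed

lemma hurwitz_zeta_scaled_has_sum:
  assumes "Re s > 1" "a > 0" "c > 0"
  shows "((\<lambda>n. complex_of_real (a * (real n + c)) powr - s) has_sum
           complex_of_real a powr - s * hurwitz_zeta s c) UNIV"
proof -
  have "complex_of_real (a * (real n + c)) powr - s
          = complex_of_real a powr - s * complex_of_real (real n + c) powr - s" for n
    using assms by (intro of_real_mult_powr) auto
  then show ?thesis
    using has_sum_cmult_right[OF hurwitz_zeta_has_sum[OF assms(1,3)]] by simp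
qed

lemma norm_hurwitz_zeta_le:
  assumes "Re s > 1" "x \<ge> 1"
  shows "norm (hurwitz_zeta s x)
           \<le> x powr - ((Re s - 1) / 2) * (\<Sum>n. (real n + 1) powr - ((Re s + 1) / 2))"
proof -
  define d where "d = (Re s - 1) / 2"
  have d_pos: "d > 0" and exponent_eq: "(Re s + 1) / 2 = 1 + d"
    using assms(1) by (simp_all add: d_def field_simps)
  have x: "x > 0"
    using assms(2) by simp
  have summable_bound: "summable (\<lambda>n. (real n + 1) powr - (1 + d))"
    using d_pos by (intro summable_shifted_powr) auto
  have term_le: "norm (complex_of_real (real n + x) powr - s) \<le> x powr - d * (real n + 1) powr - (1 + d)"
    for n
  proof -
    have "norm (complex_of_real (real n + x) powr - s) = (real n + x) powr - Re s"
      using x by (subst norm_of_real_powr) (auto simp: add_nonneg_pos)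
    also have "- Re s = - (1 + d) + - d"
      by (simp add: d_def)
    also have "(real n + x) powr \<dots> = (real n + x) powr - (1 + d) * (real n + x) powr - d"
      by (rule powr_add)
    also have "\<dots> \<le> (real n + 1) powr - (1 + d) * x powr - d"
      using d_pos assms(2) by (intro mult_mono powr_mono2') auto
    finally show ?thesis
      by (simp add: mult.commute)
  qed
  have "norm (hurwitz_zeta s x) \<le> (\<Sum>n. norm (complex_of_real (real n + x) powr - s))"
    unfolding hurwitz_zeta_def
    using assms(1) x by (intro summable_norm hurwitz_zeta_series_summable_norm)
  also have "\<dots> \<le> (\<Sum>n. x powr - d * (real n + 1) powr - (1 + d))"
    using assms(1) x summable_bound term_le
    by (intro suminf_le summable_mult hurwitz_zeta_series_summable_norm) auto
  also have "\<dots> = x powr - d * (\<Sum>n. (real n + 1) powr - (1 + d))"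
    using summable_bound by (rule suminf_mult)
  finally show ?thesis
    by (simp only: exponent_eq d_def)
qed

lemma hurwitz_zeta_tendsto_zero:
  assumes "Re s > 1"
  shows "(hurwitz_zeta s \<longlongrightarrow> 0) at_top"
proof (rule Lim_null_comparison)
  define K where "K = (\<Sum>n. (real n + 1) powr - ((Re s + 1) / 2))"
  show "\<forall>\<^sub>F x in at_top. norm (hurwitz_zeta s x) \<le> x powr - ((Re s - 1) / 2) * K"
    using eventually_ge_at_top[of 1]
    by eventually_elim (use norm_hurwitz_zeta_le[OF assms] in \<open>simp add: K_def\<close>)
  show "((\<lambda>x. x powr - ((Re s - 1) / 2) * K) \<longlongrightarrow> 0) at_top"
    using assms by (intro tendsto_mult_left_zero tendsto_neg_powr filterlim_ident) auto
qed

lemma hurwitz_zeta_multiples_tendsto_zero: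
  assumes "Re s > 1" "a > 0"
  shows "(\<lambda>k. hurwitz_zeta s (real (Suc k) * a)) \<longlonglongrightarrow> 0"
proof (rule filterlim_compose[OF hurwitz_zeta_tendsto_zero[OF assms(1)]])
  show "filterlim (\<lambda>k. real (Suc k) * a) at_top sequentially"
    by (rule filterlim_at_top_mult_tendsto_pos[OF tendsto_const assms(2)
          filterlim_compose[OF filterlim_real_sequentially filterlim_Suc]])
qed

lemma norm_of_real_powr_diff_le:
  assumes x: "x > 0" and h: "h \<ge> 0" and s: "Re s \<ge> - 1"
  shows "norm (complex_of_real x powr - s - complex_of_real (x + h) powr - s)
           \<le> norm s * x powr (- Re s - 1) * h"
proof -
  define S where "S = closed_segment (complex_of_real x) (complex_of_real (x + h))"
  have S_real: "\<exists>t. z = complex_of_real t \<and> x \<le> t" if "z \<in> S" for z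
  proof -
    obtain u where u: "0 \<le> u" "u \<le> 1"
      "z = (1 - u) *\<^sub>R complex_of_real x + u *\<^sub>R complex_of_real (x + h)"
      using \<open>z \<in> S\<close> unfolding S_def closed_segment_def by auto
    then have "z = complex_of_real (x + u * h)"
      by (simp add: scaleR_conv_of_real algebra_simps)
    moreover have "x \<le> x + u * h"
      using u h by simp
    ultimately show ?thesis
      by blast
  qed
  have "norm (complex_of_real x powr - s - complex_of_real (x + h) powr - s)
          \<le> norm s * x powr (- Re s - 1) * norm (complex_of_real x - complex_of_real (x + h))"
  proof (rule field_differentiable_bound[where f' = "\<lambda>z. - s * z powr (- s - 1)"])
    fix z assume "z \<in> S"
    then obtain t where t: "z = complex_of_real t" "x \<le> t"
      using S_real by blast
    then have "z \<notin> \<real>\<^sub>\<le>\<^sub>0"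
      using x by (auto simp: complex_nonpos_Reals_iff)
    from has_field_derivative_powr[OF this, of "- s"]
    show "((\<lambda>z. z powr - s) has_field_derivative - s * z powr (- s - 1)) (at z within S)"
      by (rule has_field_derivative_at_within)
    have "norm (- s * z powr (- s - 1)) = norm s * t powr (- Re s - 1)"
      using t x by (simp add: norm_mult norm_of_real_powr)
    also have "\<dots> \<le> norm s * x powr (- Re s - 1)"
      using t x s by (intro mult_left_mono powr_mono2') auto
    finally show "norm (- s * z powr (- s - 1)) \<le> norm s * x powr (- Re s - 1)" .
  qed (auto simp: S_def)
  also have "norm (complex_of_real x - complex_of_real (x + h)) = h"
    using h by simp
  finally show ?thesis .
qed

lemma summable_on_product_nonneg:
  fixes u v :: "nat \<Rightarrow> real"
  assumes "summable u" "summable v" "\<And>n. u n \<ge> 0" "\<And>n. v n \<ge> 0"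
  shows "(\<lambda>(m, k). u m * v k) summable_on UNIV"
proof -
  have u: "u summable_on UNIV" and v: "(v has_sum suminf v) UNIV"
    using assms by (simp_all add: norm_summable_imp_has_sum norm_summable_imp_summable_on summable_sums)
  have "(\<lambda>(m, k). u m * v k) summable_on Sigma UNIV (\<lambda>_. UNIV)"
    using assms has_sum_cmult_right[OF v] summable_on_cmult_left[OF u]
    by (intro summable_on_SigmaI[where g = "\<lambda>m. u m * suminf v"]) auto
  then show ?thesis
    by simp
qed

lemma lattice_powr_summable_on:
  assumes p: "p > 2" and pos: "\<alpha> > 0" "\<beta> > 0" "\<gamma> > 0"
  shows "(\<lambda>(m::nat, k::nat). (\<alpha> * real m + \<beta> * real k + \<gamma>) powr - p) summable_on UNIV"
proof -
  define \<mu> where "\<mu> = min \<alpha> (min \<beta> \<gamma>)"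
  have \<mu>_pos: "\<mu> > 0"
    using pos by (simp add: \<mu>_def)
  define u where "u n = (\<mu> * (real n + 1)) powr - (p / 2)" for n :: nat
  have "u = (\<lambda>n. \<mu> powr - (p / 2) * (real n + 1) powr - (p / 2))"
    using \<mu>_pos by (simp add: u_def fun_eq_iff powr_mult)
  then have "summable u"
    using p by (auto intro: summable_shifted_powr)
  then have "(\<lambda>(m, k). u m * u k) summable_on UNIV"
    by (rule summable_on_product_nonneg[OF _ \<open>summable u\<close>]) (simp_all add: u_def)
  then show ?thesis
  proof (rule summable_on_comparison_test)
    fix mk :: "nat \<times> nat"
    obtain m k where mk: "mk = (m, k)"
      by fastforce
    define A where "A = \<alpha> * real m + \<beta> * real k + \<gamma>"
    have "\<mu> * real m \<le> \<alpha> * real m" "\<mu> * real k \<le> \<beta> * real k" "\<mu> \<le> \<gamma>"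
      "0 \<le> \<alpha> * real m" "0 \<le> \<beta> * real k"
      using pos by (auto simp: \<mu>_def intro: mult_right_mono)
    then have A: "\<mu> * (real m + 1) \<le> A" "\<mu> * (real k + 1) \<le> A"
      by (simp_all add: A_def distrib_left)
    have "A powr - p = A powr - (p / 2) * A powr - (p / 2)"
      by (simp flip: powr_add)
    also have "\<dots> \<le> u m * u k"
      unfolding u_def using A \<mu>_pos p by (intro mult_mono powr_mono2') auto
    finally show "(\<lambda>(m, k). (\<alpha> * real m + \<beta> * real k + \<gamma>) powr - p) mk \<le> (\<lambda>(m, k). u m * u k) mk"
      by (simp add: mk A_def)
  qed auto
qed

lemma has_sum_rows_and_columns:
  fixes F :: "'a \<times> 'b \<Rightarrow> 'c::banach"
  assumes "(\<lambda>x. norm (F x)) summable_on UNIV"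
    and rows: "\<And>x. ((\<lambda>y. F (x, y)) has_sum r x) UNIV"
    and columns: "\<And>y. ((\<lambda>x. F (x, y)) has_sum c y) UNIV"
  shows "(r has_sum infsum F UNIV) UNIV" "(c has_sum infsum F UNIV) UNIV"
proof -
  have F: "(F has_sum infsum F UNIV) (UNIV \<times> UNIV)"
    unfolding UNIV_Times_UNIV by (rule has_sum_infsum[OF abs_summable_summable[OF assms(1)]])
  then show "(r has_sum infsum F UNIV) UNIV"
    using rows by (rule has_sum_SigmaD)
  from F have "((\<lambda>(y, x). F (x, y)) has_sum infsum F UNIV) (UNIV \<times> UNIV)"
    by (subst (asm) has_sum_swap)
  then show "(c has_sum infsum F UNIV) UNIV"
    by (rule has_sum_SigmaD) (use columns in simp)
qed

lemma sums_of_paired_sums: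
  fixes f :: "nat \<Rightarrow> 'a::real_normed_vector"
  assumes pairs: "(\<lambda>j. f (2 * j) + f (2 * j + 1)) sums S" and "f \<longlonglongrightarrow> 0"
  shows "f sums S"
  unfolding sums_def
proof (rule limseq_even_odd)
  have "sum f {..<2 * n} = (\<Sum>j<n. f (2 * j) + f (2 * j + 1))" for n
    by (induction n) simp_all
  then show even: "(\<lambda>n. sum f {..<2 * n}) \<longlonglongrightarrow> S"
    using pairs by (simp add: sums_def)
  have "(\<lambda>n. f (2 * n)) \<longlonglongrightarrow> 0"
    using LIMSEQ_subseq_LIMSEQ[OF \<open>f \<longlonglongrightarrow> 0\<close>, of "\<lambda>n. 2 * n"]
    by (simp add: strict_mono_def o_def)
  from tendsto_add[OF even this] show "(\<lambda>n. sum f {..<2 * n + 1}) \<longlonglongrightarrow> S"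
    by simp
qed

lemma sums_mult_cancel:
  fixes f :: "nat \<Rightarrow> 'a::real_normed_field"
  assumes "c \<noteq> 0" "(\<lambda>n. c * f n) sums S"
  shows "summable f" "S = c * suminf f"
proof -
  show "summable f"
    using assms by (simp add: sums_iff)
  then show "S = c * suminf f"
    using assms(2) by (simp add: sums_iff suminf_mult)
qed

lemma multiples_double_series_summable_norm:
  assumes a: "a > 0" and s: "Re s > 2"
  shows "(\<lambda>(k, m). norm (complex_of_real (real m + real (Suc k) * a) powr - s)) summable_on UNIV"
proof -
  have norm_eq: "norm (complex_of_real (real m + real (Suc k) * a) powr - s)
                   = (a * real k + 1 * real m + a) powr - Re s" for k m
  proof -
    have eq: "real m + real (Suc k) * a = a * real k + 1 * real m + a"
      by (simp add: algebra_simps)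
    have "a * real k + 1 * real m + a > 0"
      using a by (simp add: add_nonneg_pos)
    then show ?thesis
      unfolding eq by (subst norm_of_real_powr) auto
  qed
  show ?thesis
    unfolding norm_eq by (rule lattice_powr_summable_on) (use a s in auto)
qed

lemma paired_multiples_double_series_summable_norm:
  assumes a: "a > 0" and s: "Re s > 1"
  shows "(\<lambda>(j, m). norm (complex_of_real (real m + real (2 * j + 1) * a) powr - s
                        - complex_of_real (real m + real (2 * j + 2) * a) powr - s)) summable_on UNIV"
proof (rule summable_on_comparison_test)
  show "(\<lambda>(j, m). norm s * a * (2 * a * real j + 1 * real m + a) powr - (Re s + 1)) summable_on UNIV"
    using summable_on_cmult_right[OF lattice_powr_summable_on[of "Re s + 1" "2 * a" 1 a]] a s
    by (simp add: case_prod_unfold)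
  fix jm :: "nat \<times> nat"
  obtain j m where jm: "jm = (j, m)"
    by fastforce
  define x where "x = 2 * a * real j + 1 * real m + a"
  have "x > 0"
    using a by (simp add: x_def add_nonneg_pos)
  have x_eqs: "real m + real (2 * j + 1) * a = x" "real m + real (2 * j + 2) * a = x + a"
    by (simp_all add: x_def algebra_simps)
  have "norm (complex_of_real x powr - s - complex_of_real (x + a) powr - s)
          \<le> norm s * x powr (- Re s - 1) * a"
    by (rule norm_of_real_powr_diff_le) (use \<open>x > 0\<close> a s in auto)
  then show "(\<lambda>(j, m). norm (complex_of_real (real m + real (2 * j + 1) * a) powr - s
                  - complex_of_real (real m + real (2 * j + 2) * a) powr - s)) jm
               \<le> (\<lambda>(j, m). norm s * a * (2 * a * real j + 1 * real m + a) powr - (Re s + 1)) jm"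
    unfolding jm prod.case x_eqs by (simp add: x_def mult_ac)
qed auto

lemma hurwitz_zeta_sum_multiples:
  assumes a: "a > 0" and s: "Re s > 2"
  shows "summable (\<lambda>n. hurwitz_zeta s (real n / a + 1))"
    and "(\<lambda>k. hurwitz_zeta s (real (Suc k) * a)) sums
           (complex_of_real a powr - s * (\<Sum>n. hurwitz_zeta s (real n / a + 1)))"
proof -
  define F where "F = (\<lambda>(k, m). complex_of_real (real m + real (Suc k) * a) powr - s)"
  define c where "c = complex_of_real a powr - s"
  have abs_summable: "(\<lambda>x. norm (F x)) summable_on UNIV"
    using multiples_double_series_summable_norm[OF a s] by (simp add: F_def case_prod_unfold)
  have rows: "((\<lambda>m. F (k, m)) has_sum hurwitz_zeta s (real (Suc k) * a)) UNIV" for k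
    using hurwitz_zeta_has_sum[of s "real (Suc k) * a"] a s by (simp add: F_def)
  have columns: "((\<lambda>k. F (k, m)) has_sum c * hurwitz_zeta s (real m / a + 1)) UNIV" for m
  proof -
    have scaled: "real m + real (Suc k) * a = a * (real k + (real m / a + 1))" for k
      using a by (simp add: field_simps)
    show ?thesis
      unfolding F_def prod.case c_def scaled
      by (rule hurwitz_zeta_scaled_has_sum) (use a s in \<open>auto intro!: add_nonneg_pos\<close>)
  qed
  note double_sum = has_sum_rows_and_columns[OF abs_summable rows columns, THEN has_sum_imp_sums]
  have "c \<noteq> 0"
    using a by (simp add: c_def)
  from sums_mult_cancel[OF this double_sum(2)] double_sum(1)
  show "summable (\<lambda>n. hurwitz_zeta s (real n / a + 1))"
    and "(\<lambda>k. hurwitz_zeta s (real (Suc k) * a)) sums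
           (complex_of_real a powr - s * (\<Sum>n. hurwitz_zeta s (real n / a + 1)))"
    by (simp_all add: c_def)
qed

lemma hurwitz_zeta_alternating_sum_multiples:
  assumes a: "a > 0" and s: "Re s > 1"
  shows "summable (\<lambda>n. hurwitz_zeta s (real n / (2 * a) + 1 / 2)
                        - hurwitz_zeta s (real n / (2 * a) + 1))"
    and "(\<lambda>k. (-1) ^ k * hurwitz_zeta s (real (Suc k) * a)) sums
           (complex_of_real (2 * a) powr - s *
              (\<Sum>n. hurwitz_zeta s (real n / (2 * a) + 1 / 2)
                     - hurwitz_zeta s (real n / (2 * a) + 1)))"
proof -
  define F where "F = (\<lambda>(j, m). complex_of_real (real m + real (2 * j + 1) * a) powr - s
                             - complex_of_real (real m + real (2 * j + 2) * a) powr - s)"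
  define g where "g k = (-1) ^ k * hurwitz_zeta s (real (Suc k) * a)" for k
  define Z where "Z m = hurwitz_zeta s (real m / (2 * a) + 1 / 2)
                        - hurwitz_zeta s (real m / (2 * a) + 1)" for m
  define c where "c = complex_of_real (2 * a) powr - s"
  have abs_summable: "(\<lambda>x. norm (F x)) summable_on UNIV"
    using paired_multiples_double_series_summable_norm[OF a s] by (simp add: F_def case_prod_unfold)
  have rows: "((\<lambda>m. F (j, m)) has_sum g (2 * j) + g (2 * j + 1)) UNIV" for j
  proof -
    have "((\<lambda>m. F (j, m)) has_sum hurwitz_zeta s (real (2 * j + 1) * a)
                                - hurwitz_zeta s (real (2 * j + 2) * a)) UNIV"
      unfolding F_def prod.case using a s by (intro has_sum_diff hurwitz_zeta_has_sum) auto
    then show ?thesis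
      by (simp add: g_def)
  qed
  have columns: "((\<lambda>j. F (j, m)) has_sum c * Z m) UNIV" for m
  proof -
    have scaled: "real m + real (2 * j + 1) * a = 2 * a * (real j + (real m / (2 * a) + 1 / 2))"
      "real m + real (2 * j + 2) * a = 2 * a * (real j + (real m / (2 * a) + 1))" for j
      using a by (simp_all add: field_simps)
    have "((\<lambda>j. F (j, m)) has_sum c * hurwitz_zeta s (real m / (2 * a) + 1 / 2)
                                - c * hurwitz_zeta s (real m / (2 * a) + 1)) UNIV"
      unfolding F_def prod.case c_def scaled using a s
      by (intro has_sum_diff hurwitz_zeta_scaled_has_sum) (auto intro!: add_nonneg_pos)
    then show ?thesis
      by (simp add: Z_def right_diff_distrib)
  qed
  note double_sum = has_sum_rows_and_columns[OF abs_summable rows columns, THEN has_sum_imp_sums]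
  have "(\<lambda>k. norm (g k)) \<longlonglongrightarrow> 0"
    using tendsto_norm_zero[OF hurwitz_zeta_multiples_tendsto_zero[OF s a]]
    by (simp add: g_def norm_mult norm_power)
  then have "g sums infsum F UNIV"
    by (rule sums_of_paired_sums[OF double_sum(1) tendsto_norm_zero_cancel])
  moreover have "c \<noteq> 0"
    using a by (simp add: c_def)
  from sums_mult_cancel[OF this double_sum(2)] calculation
  show "summable Z" and "g sums (c * suminf Z)"
    by simp_all
qed

theorem mainTheorem14:
  fixes a :: real
  assumes "a > 0"
  shows "(\<forall>s::complex. Re s > 2 \<longrightarrow>
            summable (\<lambda>n::nat. hurwitz_zeta s (real n / a + 1)) \<and>
            (\<lambda>k::nat. hurwitz_zeta s (real (Suc k) * a)) sums
              (complex_of_real a powr (- s) * (\<Sum>n. hurwitz_zeta s (real n / a + 1))))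
       \<and> (\<forall>s::complex. Re s > 1 \<longrightarrow>
            summable (\<lambda>n::nat. hurwitz_zeta s (real n / (2 * a) + 1 / 2)
                                 - hurwitz_zeta s (real n / (2 * a) + 1)) \<and>
            (\<lambda>k::nat. (-1) ^ k * hurwitz_zeta s (real (Suc k) * a)) sums
              (complex_of_real (2 * a) powr (- s) *
                 (\<Sum>n. hurwitz_zeta s (real n / (2 * a) + 1 / 2)
                        - hurwitz_zeta s (real n / (2 * a) + 1))))"
  using hurwitz_zeta_sum_multiples[OF assms] hurwitz_zeta_alternating_sum_multiples[OF assms]
  by simp

end
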